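(* Let $\varepsilon$ be a random variable with distribution $p$ on a measurable space $\mathcal{E}$, let $f:\mathcal{E}\times\mathbb{R}^d\to\mathbb{R}$, and let $F(\theta)=\mathbb{E}_{\varepsilon\sim p}[f(\varepsilon,\theta)]$ with minimizer $\theta^*$; assume all expectations below are finite and gradient and expectation may be interchanged. Let $c:\mathcal{E}\times\mathbb{R}^d\to\mathbb{R}^d$ satisfy $\mathbb{E}_{\varepsilon}[c(\varepsilon,\theta)]=0$ for every $\theta$. Assume, for constants $L,H>0$, $\bar M\ge0$: (A1) for every $\varepsilon$, $\theta\mapsto f(\varepsilon,\theta)$ is differentiable and $L$-smooth: $\|\nabla_\theta f(\varepsilon,\theta)-\nabla_\theta f(\varepsilon,\theta')\|_2\le L\|\theta-\theta'\|_2$; (A2) for every $\varepsilon$, $\theta\mapsto f(\varepsilon,\theta)$ is $H$-strongly convex; (A4) for every $\theta$, $\mathbb{E}_{\varepsilon}\big[\|\nabla_\theta f(\varepsilon,\theta^* )-c(\varepsilon,\theta)\|_2^2\big]\le \bar M$. Fix $\theta_0\in\mathbb{R}^d$, let $\varepsilon_0,\varepsilon_1,\dots$ be i.i.d. with law $p$, and define for $t\ge1$ $$\theta_t=\theta_{t-1}-\eta\big(\nabla_\theta f(\varepsilon_{t-1},\theta_{t-1})-c(\varepsilon_{t-1},\theta_{t-1})\big).$$ If $0<\eta\le\frac{1}{2L}$ and $\bar\rho=1-\eta H(1-2L\eta)$ (with $\bar\rho\neq1$), then for all $t\ge0$, $$\mathbb{E}\big[\|\theta_t-\theta^*\|_2^2\big]\le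 \bar\rho^{\,t}\,\|\theta_0-\theta^*\|_2^2+\frac{2\eta^2\bar M\,(\bar\rho^{\,t}-1)}{\bar\rho-1}.$$
   Context: $\nabla_\theta$ is the gradient in the parameter $\theta$. The update is a stochastic gradient step in which the stochastic gradient is corrected by a zero-mean control variate $c$. *)

theory Defs
  imports "HOL-Probability.Probability"
begin

definition strongly_convex_on :: "'a::real_inner set \<Rightarrow> real \<Rightarrow> ('a \<Rightarrow> real) \<Rightarrow> bool" where
  "strongly_convex_on S H g \<longleftrightarrow> convex_on S (\<lambda>x. g x - (H / 2) * (norm x)\<^sup>2)"

end

theory Submission
  imports Defs
begin

text \<open>Write d = \<theta> - \<theta>s and split the corrected stochastic gradient as
  (\<nabla>f(\<epsilon>,\<theta>) - \<nabla>f(\<epsilon>,\<theta>s)) + r with r = \<nabla>f(\<epsilon>,\<theta>s) - c(\<epsilon>,\<theta>).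
  Co-coercivity of the first part (from L-smoothness and convexity) and its strong monotonicity
  (from H-strong convexity) bound the squared distance after one step by
  \<rho> |d|^2 - 2 \<eta> \<langle>d, r\<rangle> + 2 \<eta>^2 |r|^2; the cross term has mean zero because
  \<nabla>F(\<theta>s) = 0 and c is centred, and the last term has mean at most 2 \<eta>^2 M.
  The noise of step t is independent of the first t iterates, so integrating it out first
  (Fubini on the product of t + 1 copies of p) gives
  E |\<theta>(t+1) - \<theta>s|^2 \<le> \<rho> E |\<theta>(t) - \<theta>s|^2 + 2 \<eta>^2 M,
  and unrolling this recursion yields the geometric bound.\<close>

lemma lipschitz_gradient_quadratic_upper_bound:
  fixes \<phi> :: "'a::real_inner \<Rightarrow> real"
  assumes D: "\<And>x. (\<phi> has_derivative (\<lambda>h. G x \<bullet> h)) (at x)"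
    and Lip: "\<And>x y. norm (G x - G y) \<le> L * norm (x - y)" and L: "0 \<le> L"
  shows "\<phi> b \<le> \<phi> a + G a \<bullet> (b - a) + L * (norm (b - a))\<^sup>2"
proof -
  have "norm (\<phi> b - \<phi> a - G a \<bullet> (b - a)) \<le> norm (b - a) * (L * norm (b - a))"
  proof (rule differentiable_bound_linearization[where S="closed_segment a b" and f'="\<lambda>x h. G x \<bullet> h"])
    fix t :: real assume "t \<in> {0..1}"
    then show "a + t *\<^sub>R (b - a) \<in> closed_segment a b"
      by (simp add: in_segment(1)) (rule exI[of _ t], auto simp: algebra_simps)
  next
    fix x assume "x \<in> closed_segment a b"
    show "(\<phi> has_derivative (\<lambda>h. G x \<bullet> h)) (at x within closed_segment a b)"
      by (rule has_derivative_at_withinI[OF D])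
  next
    fix x assume x: "x \<in> closed_segment a b"
    have "onorm (\<lambda>h. (G x - G a) \<bullet> h) \<le> L * norm (b - a)"
    proof (rule onorm_bound)
      show "0 \<le> L * norm (b - a)" using L by simp
      fix h
      have "norm ((G x - G a) \<bullet> h) \<le> norm (G x - G a) * norm h"
        by (simp add: Cauchy_Schwarz_ineq2)
      also have "\<dots> \<le> L * norm (x - a) * norm h" by (intro mult_right_mono Lip) auto
      also have "\<dots> \<le> L * norm (b - a) * norm h"
        using segment_bound(1)[OF x] L by (intro mult_right_mono mult_left_mono) auto
      finally show "norm ((G x - G a) \<bullet> h) \<le> L * norm (b - a) * norm h" .
    qed
    moreover have "(\<lambda>h. G x \<bullet> h) - (\<lambda>h. G a \<bullet> h) = (\<lambda>h. (G x - G a) \<bullet> h)"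
      by (simp add: fun_eq_iff inner_diff_left)
    ultimately show "onorm ((\<lambda>h. G x \<bullet> h) - (\<lambda>h. G a \<bullet> h)) \<le> L * norm (b - a)" by simp
  qed simp
  then show ?thesis by (simp add: abs_le_iff power2_eq_square mult_ac)
qed

lemma strongly_convex_on_gradient_lower_bound:
  fixes \<phi> :: "'a::real_inner \<Rightarrow> real"
  assumes D: "\<And>x. (\<phi> has_derivative (\<lambda>h. G x \<bullet> h)) (at x)"
    and SC: "strongly_convex_on UNIV H \<phi>"
  shows "\<phi> x + G x \<bullet> (y - x) + H / 2 * (norm (y - x))\<^sup>2 \<le> \<phi> y"
proof -
  define \<psi> where "\<psi> w = \<phi> w - H / 2 * (w \<bullet> w)" for w
  define r where "r t = \<psi> (x + t *\<^sub>R (y - x))" for t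
  have "convex_on UNIV \<psi>"
    using SC unfolding strongly_convex_on_def \<psi>_def by (simp add: power2_norm_eq_inner)
  then have convex: "convex_on UNIV r"
    unfolding convex_on_def r_def
  proof (intro conjI ballI allI impI)
    fix s t u v :: real assume uv: "0 \<le> u" "0 \<le> v" "u + v = 1"
    have "x + (u *\<^sub>R s + v *\<^sub>R t) *\<^sub>R (y - x) = u *\<^sub>R (x + s *\<^sub>R (y - x)) + v *\<^sub>R (x + t *\<^sub>R (y - x))"
      using uv by (simp add: algebra_simps flip: scaleR_add_left)
    with \<open>convex_on UNIV \<psi>\<close> uv
    show "\<psi> (x + (u *\<^sub>R s + v *\<^sub>R t) *\<^sub>R (y - x)) \<le> u * \<psi> (x + s *\<^sub>R (y - x)) + v * \<psi> (x + t *\<^sub>R (y - x))"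
      unfolding convex_on_def by simp
  qed simp
  have D\<psi>: "(\<psi> has_derivative (\<lambda>h. G w \<bullet> h - H / 2 * (h \<bullet> w + w \<bullet> h))) (at w)" for w
    unfolding \<psi>_def using D[of w] by (auto intro!: derivative_eq_intros)
  have "((\<lambda>t. x + t *\<^sub>R (y - x)) has_derivative (\<lambda>t. t *\<^sub>R (y - x))) (at 0)"
    by (auto intro!: derivative_eq_intros)
  from has_derivative_compose[OF this D\<psi>[of "x + 0 *\<^sub>R (y - x)"]]
  have "(r has_field_derivative (G x \<bullet> (y - x) - H * (x \<bullet> (y - x)))) (at 0 within UNIV)"
    unfolding has_field_derivative_def r_def[abs_def]
    by (rule has_derivative_eq_rhs) (auto simp: fun_eq_iff algebra_simps inner_commute)
  from convex_on_imp_above_tangent[OF convex _ _ _ this]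
  have "(G x \<bullet> (y - x) - H * (x \<bullet> (y - x))) * (1 - 0) \<le> r 1 - r 0"
    by (simp del: mult_1_right)
  then show ?thesis
    unfolding r_def \<psi>_def by (simp add: power2_norm_eq_inner algebra_simps inner_commute)
qed

lemma lipschitz_gradient_bregman_lower_bound:
  fixes \<phi> :: "'a::real_inner \<Rightarrow> real"
  assumes D: "\<And>x. (\<phi> has_derivative (\<lambda>h. G x \<bullet> h)) (at x)"
    and Lip: "\<And>x y. norm (G x - G y) \<le> L * norm (x - y)" and L: "0 < L"
    and tangent: "\<And>x y. \<phi> x + G x \<bullet> (y - x) \<le> \<phi> y"
  shows "(norm (G y - G x))\<^sup>2 / (4 * L) \<le> \<phi> y - \<phi> x - G x \<bullet> (y - x)"
proof -
  define v where "v = G y - G x"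
  define k where "k = 1 / (2 * L)"
  \<comment> \<open>Compare the tangent at x with the quadratic upper bound at y, both evaluated at the
      gradient step z from y.\<close>
  define z where "z = y - k *\<^sub>R v"
  have "\<phi> x + G x \<bullet> (z - x) \<le> \<phi> z" by (rule tangent)
  also have "\<phi> z \<le> \<phi> y + G y \<bullet> (z - y) + L * (norm (z - y))\<^sup>2"
    by (rule lipschitz_gradient_quadratic_upper_bound[OF D Lip]) (use L in simp)
  finally have "\<phi> x + G x \<bullet> (z - x) \<le> \<phi> y + G y \<bullet> (z - y) + L * (norm (z - y))\<^sup>2" .
  moreover have "G x \<bullet> (z - x) = G x \<bullet> (y - x) - k * (G x \<bullet> v)"
    and "G y \<bullet> (z - y) = - (k * (G y \<bullet> v))"
    by (simp_all add: z_def inner_diff_right algebra_simps)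
  moreover have "L * (norm (z - y))\<^sup>2 = k / 2 * (norm v)\<^sup>2"
    using L by (simp add: z_def k_def field_simps power2_eq_square)
  moreover have "k * (G y \<bullet> v) - k * (G x \<bullet> v) = k * (norm v)\<^sup>2"
    by (simp add: v_def power2_norm_eq_inner inner_diff_left algebra_simps)
  moreover have "k / 2 = 1 / (4 * L)" by (simp add: k_def)
  ultimately show ?thesis unfolding v_def by (simp add: field_simps)
qed

lemma lipschitz_gradient_cocoercive:
  fixes \<phi> :: "'a::real_inner \<Rightarrow> real"
  assumes D: "\<And>x. (\<phi> has_derivative (\<lambda>h. G x \<bullet> h)) (at x)"
    and Lip: "\<And>x y. norm (G x - G y) \<le> L * norm (x - y)" and L: "0 < L"
    and tangent: "\<And>x y. \<phi> x + G x \<bullet> (y - x) \<le> \<phi> y"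
  shows "(norm (G y - G x))\<^sup>2 \<le> 2 * L * ((G y - G x) \<bullet> (y - x))"
proof -
  note bound = lipschitz_gradient_bregman_lower_bound[OF D Lip L tangent]
  have "(norm (G y - G x))\<^sup>2 / (4 * L) + (norm (G x - G y))\<^sup>2 / (4 * L)
      \<le> (\<phi> y - \<phi> x - G x \<bullet> (y - x)) + (\<phi> x - \<phi> y - G y \<bullet> (x - y))"
    by (intro add_mono bound)
  then have "(norm (G y - G x))\<^sup>2 / (2 * L) \<le> (G y - G x) \<bullet> (y - x)"
    by (simp add: norm_minus_commute inner_diff_left inner_diff_right field_simps)
  then show ?thesis using L by (simp add: field_simps)
qed

lemma strongly_convex_on_lipschitz_gradient_cocoercive:
  fixes \<phi> :: "'a::real_inner \<Rightarrow> real"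
  assumes D: "\<And>x. (\<phi> has_derivative (\<lambda>h. G x \<bullet> h)) (at x)"
    and Lip: "\<And>x y. norm (G x - G y) \<le> L * norm (x - y)" and L: "0 < L"
    and SC: "strongly_convex_on UNIV H \<phi>" and H: "0 \<le> H"
  shows "(norm (G y - G x))\<^sup>2 \<le> 2 * L * ((G y - G x) \<bullet> (y - x))"
proof (rule lipschitz_gradient_cocoercive[OF D Lip L])
  fix u v :: 'a
  have "0 \<le> H / 2 * (norm (v - u))\<^sup>2" using H by simp
  with strongly_convex_on_gradient_lower_bound[OF D SC, of u v]
  show "\<phi> u + G u \<bullet> (v - u) \<le> \<phi> v" by linarith
qed

lemma strongly_convex_on_gradient_strongly_monotone:
  fixes \<phi> :: "'a::real_inner \<Rightarrow> real"
  assumes D: "\<And>x. (\<phi> has_derivative (\<lambda>h. G x \<bullet> h)) (at x)"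
    and SC: "strongly_convex_on UNIV H \<phi>"
  shows "H * (norm (y - x))\<^sup>2 \<le> (G y - G x) \<bullet> (y - x)"
proof -
  note bound = strongly_convex_on_gradient_lower_bound[OF D SC]
  have "(\<phi> x + G x \<bullet> (y - x) + H / 2 * (norm (y - x))\<^sup>2) + (\<phi> y + G y \<bullet> (x - y) + H / 2 * (norm (x - y))\<^sup>2)
      \<le> \<phi> y + \<phi> x"
    by (intro add_mono bound)
  then show ?thesis
    by (simp add: norm_minus_commute inner_diff_left inner_diff_right algebra_simps)
qed

lemma gradient_zero_at_minimum:
  fixes F :: "'a::real_inner \<Rightarrow> real"
  assumes D: "(F has_derivative (\<lambda>h. g \<bullet> h)) (at x)" and min: "\<And>y. F x \<le> F y"
  shows "g = 0"
proof -
  have "(\<lambda>h. g \<bullet> h) = (\<lambda>h. 0)"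
    by (rule differential_zero_maxmin[of x UNIV, OF _ _ D]) (use min in auto)
  then have "g \<bullet> g = 0" by metis
  then show ?thesis by simp
qed

lemma strongly_convex_modulus_le_lipschitz:
  fixes \<phi> :: "'a::euclidean_space \<Rightarrow> real"
  assumes D: "\<And>x. (\<phi> has_derivative (\<lambda>h. G x \<bullet> h)) (at x)"
    and SC: "strongly_convex_on UNIV H \<phi>"
    and Lip: "\<And>x y. norm (G x - G y) \<le> L * norm (x - y)"
  shows "H \<le> L"
proof -
  obtain b :: 'a where b: "b \<in> Basis" using nonempty_Basis by blast
  have "H * (norm (b - 0))\<^sup>2 \<le> (G b - G 0) \<bullet> (b - 0)"
    by (rule strongly_convex_on_gradient_strongly_monotone[OF D SC])
  also have "\<dots> \<le> norm (G b - G 0) * norm (b - 0)" by (rule norm_cauchy_schwarz)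
  also have "\<dots> \<le> L * norm (b - 0) * norm (b - 0)" by (intro mult_right_mono Lip) auto
  finally show ?thesis using b by simp
qed

lemma sgd_contraction_factor_nonneg:
  fixes \<eta> H L :: real
  assumes "0 < \<eta>" "2 * L * \<eta> \<le> 1" "0 \<le> H" "H \<le> L"
  shows "0 \<le> 1 - \<eta> * H * (1 - 2 * L * \<eta>)"
proof -
  have "\<eta> * H \<le> \<eta> * L" using assms by simp
  also have "\<dots> \<le> 1 / 2" using assms by (simp add: algebra_simps)
  finally have "\<eta> * H * (1 - 2 * L * \<eta>) \<le> 1 / 2 * 1"
    using assms by (intro mult_mono) auto
  then show ?thesis by simp
qed

lemma sgd_step_sq_norm_le:
  fixes d D r :: "'a::real_inner"
  assumes cocoercive: "(norm D)\<^sup>2 \<le> 2 * L * (D \<bullet> d)"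
    and monotone: "H * (norm d)\<^sup>2 \<le> D \<bullet> d"
    and \<eta>: "0 < \<eta>" "2 * L * \<eta> \<le> 1" and H: "0 \<le> H"
  shows "(norm (d - \<eta> *\<^sub>R (D + r)))\<^sup>2
           \<le> (1 - \<eta> * H * (1 - 2 * L * \<eta>)) * (norm d)\<^sup>2 - 2 * \<eta> * (d \<bullet> r) + 2 * \<eta>\<^sup>2 * (norm r)\<^sup>2"
proof -
  have "(norm (d - \<eta> *\<^sub>R (D + r)))\<^sup>2
      = (norm d)\<^sup>2 - 2 * \<eta> * (D \<bullet> d) - 2 * \<eta> * (d \<bullet> r) + \<eta>\<^sup>2 * (norm (D + r))\<^sup>2"
    by (simp add: power2_norm_eq_inner inner_diff_left inner_diff_right inner_add_left
        inner_add_right algebra_simps inner_commute) (simp add: power2_eq_square algebra_simps)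
  also have "\<dots> \<le> (norm d)\<^sup>2 - 2 * \<eta> * (D \<bullet> d) - 2 * \<eta> * (d \<bullet> r)
                  + \<eta>\<^sup>2 * (2 * (norm D)\<^sup>2 + 2 * (norm r)\<^sup>2)"
  proof -
    have "(norm (D + r))\<^sup>2 \<le> 2 * (norm D)\<^sup>2 + 2 * (norm r)\<^sup>2"
      using zero_le_power2[of "norm (D - r)"]
      by (simp add: power2_norm_eq_inner inner_diff_left inner_diff_right inner_add_left
          inner_add_right algebra_simps inner_commute)
    then show ?thesis by (intro add_left_mono mult_left_mono) auto
  qed
  also have "\<dots> \<le> (norm d)\<^sup>2 - 2 * \<eta> * (1 - 2 * L * \<eta>) * (D \<bullet> d) - 2 * \<eta> * (d \<bullet> r)
                  + 2 * \<eta>\<^sup>2 * (norm r)\<^sup>2"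
    using mult_left_mono[OF cocoercive, of "\<eta>\<^sup>2"] by (simp add: algebra_simps power2_eq_square)
  also have "\<dots> \<le> (norm d)\<^sup>2 - 2 * \<eta> * (1 - 2 * L * \<eta>) * (H * (norm d)\<^sup>2) - 2 * \<eta> * (d \<bullet> r)
                  + 2 * \<eta>\<^sup>2 * (norm r)\<^sup>2"
    using mult_left_mono[OF monotone, of "2 * \<eta> * (1 - 2 * L * \<eta>)"] \<eta> by simp
  also have "\<dots> \<le> (1 - \<eta> * H * (1 - 2 * L * \<eta>)) * (norm d)\<^sup>2 - 2 * \<eta> * (d \<bullet> r) + 2 * \<eta>\<^sup>2 * (norm r)\<^sup>2"
  proof -
    have "0 \<le> \<eta> * H * (1 - 2 * L * \<eta>) * (norm d)\<^sup>2" using \<eta> H by simp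
    then show ?thesis by (simp add: algebra_simps)
  qed
  finally show ?thesis .
qed

lemma nn_integral_sgd_step_le:
  fixes G c :: "'e \<Rightarrow> 'a::euclidean_space \<Rightarrow> 'a"
  assumes p: "prob_space p"
    and G_meas: "(\<lambda>(e, \<theta>). G e \<theta>) \<in> borel_measurable (p \<Otimes>\<^sub>M borel)"
    and c_meas: "(\<lambda>(e, \<theta>). c e \<theta>) \<in> borel_measurable (p \<Otimes>\<^sub>M borel)"
    and G_int: "\<And>\<theta>. integrable p (\<lambda>e. G e \<theta>)"
    and c_int: "\<And>\<theta>. integrable p (\<lambda>e. c e \<theta>)"
    and noise_int: "\<And>\<theta>. integrable p (\<lambda>e. (norm (G e \<theta>s - c e \<theta>))\<^sup>2)"
    and G_mean: "integral\<^sup>L p (\<lambda>e. G e \<theta>s) = 0"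
    and c_mean: "\<And>\<theta>. integral\<^sup>L p (\<lambda>e. c e \<theta>) = 0"
    and noise_bound: "\<And>\<theta>. integral\<^sup>L p (\<lambda>e. (norm (G e \<theta>s - c e \<theta>))\<^sup>2) \<le> M"
    and cocoercive: "\<And>e \<theta>. e \<in> space p \<Longrightarrow>
           (norm (G e \<theta> - G e \<theta>s))\<^sup>2 \<le> 2 * L * ((G e \<theta> - G e \<theta>s) \<bullet> (\<theta> - \<theta>s))"
    and monotone: "\<And>e \<theta>. e \<in> space p \<Longrightarrow>
           H * (norm (\<theta> - \<theta>s))\<^sup>2 \<le> (G e \<theta> - G e \<theta>s) \<bullet> (\<theta> - \<theta>s)"
    and \<eta>: "0 < \<eta>" "2 * L * \<eta> \<le> 1" and H: "0 \<le> H"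
  shows "(\<integral>\<^sup>+e. (norm (\<theta> - \<eta> *\<^sub>R (G e \<theta> - c e \<theta>) - \<theta>s))\<^sup>2 \<partial>p)
           \<le> ennreal ((1 - \<eta> * H * (1 - 2 * L * \<eta>)) * (norm (\<theta> - \<theta>s))\<^sup>2 + 2 * \<eta>\<^sup>2 * M)"
proof -
  interpret prob_space p by (rule p)
  define \<rho> where "\<rho> = 1 - \<eta> * H * (1 - 2 * L * \<eta>)"
  define d where "d = \<theta> - \<theta>s"
  \<comment> \<open>Centring at the minimiser splits the step into a contraction and the zero-mean noise r.\<close>
  define r where "r e = G e \<theta>s - c e \<theta>" for e
  define q where "q e = (norm (\<theta> - \<eta> *\<^sub>R (G e \<theta> - c e \<theta>) - \<theta>s))\<^sup>2" for e
  define R where "R e = \<rho> * (norm d)\<^sup>2 - 2 * \<eta> * (d \<bullet> r e) + 2 * \<eta>\<^sup>2 * (norm (r e))\<^sup>2" for e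
  have q_le_R: "q e \<le> R e" if e: "e \<in> space p" for e
  proof -
    have "\<theta> - \<eta> *\<^sub>R (G e \<theta> - c e \<theta>) - \<theta>s = d - \<eta> *\<^sub>R ((G e \<theta> - G e \<theta>s) + r e)"
      by (simp add: d_def r_def algebra_simps)
    then show ?thesis
      unfolding q_def R_def \<rho>_def
      by (metis sgd_step_sq_norm_le cocoercive[OF e] monotone[OF e] \<eta> H d_def)
  qed
  have r_int: "integrable p r" unfolding r_def using G_int c_int by auto
  have R_int: "integrable p R"
    unfolding R_def using r_int noise_int[of \<theta>] unfolding r_def by auto
  have "q \<in> borel_measurable p"
    using measurable_Pair1[OF G_meas, of \<theta>] measurable_Pair1[OF c_meas, of \<theta>]
    unfolding q_def by simp measurable
  then have q_int: "integrable p q"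
    by (rule Bochner_Integration.integrable_bound[OF R_int])
       (auto intro!: AE_I2 simp: q_le_R order_trans[OF _ q_le_R] q_def)
  have "(\<integral>\<^sup>+e. q e \<partial>p) = ennreal (integral\<^sup>L p q)"
    by (rule nn_integral_eq_integral[OF q_int]) (simp add: q_def)
  also have "integral\<^sup>L p q \<le> integral\<^sup>L p R"
    by (rule integral_mono[OF q_int R_int q_le_R])
  also have "integral\<^sup>L p R = \<rho> * (norm d)\<^sup>2 - 2 * \<eta> * (d \<bullet> integral\<^sup>L p r) + 2 * \<eta>\<^sup>2 * (\<integral>e. (norm (r e))\<^sup>2 \<partial>p)"
    unfolding R_def using r_int noise_int[of \<theta>] unfolding r_def by (simp add: prob_space)
  also have "\<dots> \<le> \<rho> * (norm d)\<^sup>2 + 2 * \<eta>\<^sup>2 * M"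
    using G_int c_int G_mean c_mean mult_left_mono[OF noise_bound[of \<theta>], of "\<eta>\<^sup>2"]
    unfolding r_def by simp
  finally show ?thesis unfolding q_def \<rho>_def d_def by (simp add: ennreal_leI)
qed

primrec iterate_steps :: "('e \<Rightarrow> 'a \<Rightarrow> 'a) \<Rightarrow> 'a \<Rightarrow> nat \<Rightarrow> (nat \<Rightarrow> 'e) \<Rightarrow> 'a" where
  "iterate_steps s a 0 x = a"
| "iterate_steps s a (Suc t) x = s (x t) (iterate_steps s a t x)"

lemma iterate_steps_cong:
  "(\<And>i. i < t \<Longrightarrow> x i = y i) \<Longrightarrow> iterate_steps s a t x = iterate_steps s a t y"
  by (induction t) auto

lemma measurable_iterate_steps:
  assumes s: "(\<lambda>(e, \<theta>). s e \<theta>) \<in> borel_measurable (p \<Otimes>\<^sub>M borel)" and "t \<le> n"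
  shows "iterate_steps s a t \<in> borel_measurable (\<Pi>\<^sub>M i\<in>{..<n}. p)"
  using \<open>t \<le> n\<close>
proof (induction t)
  case 0
  have "iterate_steps s a 0 = (\<lambda>_. a)" by auto
  then show ?case by simp
next
  case (Suc t)
  have "(\<lambda>x. x t) \<in> measurable (\<Pi>\<^sub>M i\<in>{..<n}. p) p"
    using Suc.prems by (intro measurable_component_singleton) auto
  with Suc show ?case
    by (simp add: measurable_compose[OF measurable_Pair s, simplified])
qed

lemma nn_integral_iterate_steps_le:
  fixes s :: "'e \<Rightarrow> 'a::topological_space \<Rightarrow> 'a" and V :: "'a \<Rightarrow> real"
  assumes p: "prob_space p"
    and s: "(\<lambda>(e, \<theta>). s e \<theta>) \<in> borel_measurable (p \<Otimes>\<^sub>M borel)"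
    and V: "V \<in> borel_measurable borel" "\<And>\<theta>. 0 \<le> V \<theta>"
    and step: "\<And>\<theta>. (\<integral>\<^sup>+e. V (s e \<theta>) \<partial>p) \<le> ennreal (\<rho> * V \<theta> + C)"
    and \<rho>: "0 \<le> \<rho>" and C: "0 \<le> C"
  shows "(\<integral>\<^sup>+x. V (iterate_steps s a t x) \<partial>\<Pi>\<^sub>M i\<in>{..<t}. p)
           \<le> ennreal (\<rho> ^ t * V a + C * (\<Sum>i<t. \<rho> ^ i))"
proof (induction t)
  case 0
  show ?case by (simp add: PiM_empty)
next
  case (Suc t)
  interpret product_prob_space "\<lambda>_::nat. p" by (rule product_prob_spaceI) (use p in auto)
  let ?\<Theta> = "iterate_steps s a t"
  have m: "(\<lambda>x. V (?\<Theta> x)) \<in> borel_measurable (\<Pi>\<^sub>M i\<in>{..<t}. p)"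
    using measurable_iterate_steps[OF s order_refl] V(1) by measurable
  have m': "(\<lambda>x. V (iterate_steps s a (Suc t) x)) \<in> borel_measurable (\<Pi>\<^sub>M i\<in>{..<Suc t}. p)"
    using measurable_iterate_steps[OF s order_refl] V(1) by measurable
  have "(\<integral>\<^sup>+x. V (iterate_steps s a (Suc t) x) \<partial>\<Pi>\<^sub>M i\<in>{..<Suc t}. p)
      = (\<integral>\<^sup>+x. (\<integral>\<^sup>+e. V (iterate_steps s a (Suc t) (x(t := e))) \<partial>p) \<partial>\<Pi>\<^sub>M i\<in>{..<t}. p)"
    using m' by (simp add: lessThan_Suc product_nn_integral_insert)
  also have "\<dots> = (\<integral>\<^sup>+x. (\<integral>\<^sup>+e. V (s e (?\<Theta> x)) \<partial>p) \<partial>\<Pi>\<^sub>M i\<in>{..<t}. p)"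
  proof -
    have "?\<Theta> (x(t := e)) = ?\<Theta> x" for x e by (rule iterate_steps_cong) auto
    then show ?thesis by simp
  qed
  also have "\<dots> \<le> (\<integral>\<^sup>+x. ennreal \<rho> * ennreal (V (?\<Theta> x)) + ennreal C \<partial>\<Pi>\<^sub>M i\<in>{..<t}. p)"
    using step \<rho> V(2) C by (intro nn_integral_mono) (simp add: ennreal_plus ennreal_mult)
  also have "\<dots> = ennreal \<rho> * (\<integral>\<^sup>+x. V (?\<Theta> x) \<partial>\<Pi>\<^sub>M i\<in>{..<t}. p) + ennreal C"
    using m by (simp add: nn_integral_add nn_integral_cmult
        prob_space.emeasure_space_1[OF prob_space_PiM[OF p], of "{..<t}"])
  also have "\<dots> \<le> ennreal \<rho> * ennreal (\<rho> ^ t * V a + C * (\<Sum>i<t. \<rho> ^ i)) + ennreal C"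
    using Suc.IH by (intro add_mono mult_left_mono) auto
  also have "\<dots> = ennreal (\<rho> * (\<rho> ^ t * V a + C * (\<Sum>i<t. \<rho> ^ i)) + C)"
    using \<rho> C V(2) by (simp add: ennreal_plus ennreal_mult sum_nonneg)
  also have "\<rho> * (\<rho> ^ t * V a + C * (\<Sum>i<t. \<rho> ^ i)) + C = \<rho> ^ Suc t * V a + C * (\<Sum>i<Suc t. \<rho> ^ i)"
    by (simp only: sum.lessThan_Suc_shift) (simp add: sum_distrib_left algebra_simps)
  finally show ?case .
qed

lemma (in prob_space) nn_integral_iid_prefix:
  fixes t :: nat
  assumes indep: "indep_vars (\<lambda>_. N) X UNIV"
    and X: "\<And>i. random_variable N (X i)"
    and law: "\<And>i. distr M N (X i) = N"
    and h: "h \<in> borel_measurable (\<Pi>\<^sub>M i\<in>{..<t}. N)"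
  shows "(\<integral>\<^sup>+\<omega>. h (\<lambda>i\<in>{..<t}. X i \<omega>) \<partial>M) = (\<integral>\<^sup>+x. h x \<partial>\<Pi>\<^sub>M i\<in>{..<t}. N)"
proof (cases "t = 0")
  case True
  then show ?thesis by (simp add: PiM_empty restrict_def emeasure_space_1 nn_integral_count_space_finite)
next
  case False
  have "distr M (\<Pi>\<^sub>M i\<in>{..<t}. N) (\<lambda>\<omega>. \<lambda>i\<in>{..<t}. X i \<omega>) = (\<Pi>\<^sub>M i\<in>{..<t}. distr M N (X i))"
    using indep_vars_subset[OF indep] False by (subst indep_vars_iff_distr_eq_PiM[symmetric]) (auto intro: X)
  then have distr: "distr M (\<Pi>\<^sub>M i\<in>{..<t}. N) (\<lambda>\<omega>. \<lambda>i\<in>{..<t}. X i \<omega>) = (\<Pi>\<^sub>M i\<in>{..<t}. N)"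
    by (simp add: law)
  have "(\<integral>\<^sup>+\<omega>. h (\<lambda>i\<in>{..<t}. X i \<omega>) \<partial>M)
      = (\<integral>\<^sup>+x. h x \<partial>distr M (\<Pi>\<^sub>M i\<in>{..<t}. N) (\<lambda>\<omega>. \<lambda>i\<in>{..<t}. X i \<omega>))"
    by (rule nn_integral_distr[symmetric, OF measurable_restrict[OF X]]) (simp add: distr h)
  then show ?thesis by (simp only: distr)
qed

lemma (in prob_space) expectation_iterate_steps_le:
  fixes s :: "'e \<Rightarrow> 'b::topological_space \<Rightarrow> 'b" and V :: "'b \<Rightarrow> real"
  assumes p: "prob_space p"
    and indep: "indep_vars (\<lambda>_. p) X UNIV"
    and X: "\<And>i. random_variable p (X i)"
    and law: "\<And>i. distr M p (X i) = p"
    and s: "(\<lambda>(e, \<theta>). s e \<theta>) \<in> borel_measurable (p \<Otimes>\<^sub>M borel)"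
    and V: "V \<in> borel_measurable borel" "\<And>\<theta>. 0 \<le> V \<theta>"
    and step: "\<And>\<theta>. (\<integral>\<^sup>+e. V (s e \<theta>) \<partial>p) \<le> ennreal (\<rho> * V \<theta> + C)"
    and \<rho>: "0 \<le> \<rho>" and C: "0 \<le> C"
  shows "expectation (\<lambda>\<omega>. V (iterate_steps s a t (\<lambda>i. X i \<omega>))) \<le> \<rho> ^ t * V a + C * (\<Sum>i<t. \<rho> ^ i)"
proof -
  have restrict: "iterate_steps s a t (\<lambda>i. X i \<omega>) = iterate_steps s a t (\<lambda>i\<in>{..<t}. X i \<omega>)" for \<omega>
    by (rule iterate_steps_cong) simp
  have V_meas: "(\<lambda>x. V (iterate_steps s a t x)) \<in> borel_measurable (\<Pi>\<^sub>M i\<in>{..<t}. p)"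
    using measurable_iterate_steps[OF s order_refl] V(1) by measurable
  have "expectation (\<lambda>\<omega>. V (iterate_steps s a t (\<lambda>i. X i \<omega>)))
      = enn2real (\<integral>\<^sup>+\<omega>. V (iterate_steps s a t (\<lambda>i\<in>{..<t}. X i \<omega>)) \<partial>M)"
    using measurable_compose[OF measurable_restrict[OF X] V_meas] V(2)
    by (simp add: restrict integral_eq_nn_integral)
  also have "(\<integral>\<^sup>+\<omega>. V (iterate_steps s a t (\<lambda>i\<in>{..<t}. X i \<omega>)) \<partial>M)
      = (\<integral>\<^sup>+x. V (iterate_steps s a t x) \<partial>\<Pi>\<^sub>M i\<in>{..<t}. p)"
    by (rule nn_integral_iid_prefix[OF indep X law]) (use V_meas in measurable)
  also have "enn2real \<dots> \<le> \<rho> ^ t * V a + C * (\<Sum>i<t. \<rho> ^ i)"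
  proof (rule enn2real_leI)
    show "0 \<le> \<rho> ^ t * V a + C * (\<Sum>i<t. \<rho> ^ i)" using V(2)[of a] C \<rho> by (simp add: sum_nonneg)
  qed (rule nn_integral_iterate_steps_le[OF p s V step \<rho> C])
  finally show ?thesis .
qed

theorem mainTheorem3:
  fixes p :: "'e measure"
    and P :: "'w measure"
    and f :: "'e \<Rightarrow> 'a::euclidean_space \<Rightarrow> real"
    and gradf :: "'e \<Rightarrow> 'a \<Rightarrow> 'a"
    and c :: "'e \<Rightarrow> 'a \<Rightarrow> 'a"
    and X :: "nat \<Rightarrow> 'w \<Rightarrow> 'e"
    and theta :: "nat \<Rightarrow> 'w \<Rightarrow> 'a"
    and theta0 thetas :: 'a
    and L H Mbar eta :: real
  assumes p_prob: "prob_space p"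
    and P_prob: "prob_space P"
    and grad: "\<And>e \<theta>. e \<in> space p \<Longrightarrow> (f e has_derivative (\<lambda>h. gradf e \<theta> \<bullet> h)) (at \<theta>)"
    and f_meas: "\<And>\<theta>. integrable p (\<lambda>e. f e \<theta>)"
    and gradf_meas: "(\<lambda>(e, \<theta>). gradf e \<theta>) \<in> borel_measurable (p \<Otimes>\<^sub>M borel)"
    and c_meas: "(\<lambda>(e, \<theta>). c e \<theta>) \<in> borel_measurable (p \<Otimes>\<^sub>M borel)"
    and gradf_int: "\<And>\<theta>. integrable p (\<lambda>e. gradf e \<theta>)"
    and c_int: "\<And>\<theta>. integrable p (\<lambda>e. c e \<theta>)"
    and M_int: "\<And>\<theta>. integrable p (\<lambda>e. (norm (gradf e thetas - c e \<theta>))\<^sup>2)"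
    and interchange: "\<And>\<theta>. ((\<lambda>x. integral\<^sup>L p (\<lambda>e. f e x)) has_derivative
                         (\<lambda>h. integral\<^sup>L p (\<lambda>e. gradf e \<theta>) \<bullet> h)) (at \<theta>)"
    and minimizer: "\<And>\<theta>. integral\<^sup>L p (\<lambda>e. f e thetas) \<le> integral\<^sup>L p (\<lambda>e. f e \<theta>)"
    and c_zero: "\<And>\<theta>. integral\<^sup>L p (\<lambda>e. c e \<theta>) = 0"
    and L_pos: "L > 0" and H_pos: "H > 0" and Mbar_nonneg: "Mbar \<ge> 0"
    and A1: "\<And>e \<theta> \<theta>'. e \<in> space p \<Longrightarrow> norm (gradf e \<theta> - gradf e \<theta>') \<le> L * norm (\<theta> - \<theta>')"
    and A2: "\<And>e. e \<in> space p \<Longrightarrow> strongly_convex_on UNIV H (f e)"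
    and A4: "\<And>\<theta>. integral\<^sup>L p (\<lambda>e. (norm (gradf e thetas - c e \<theta>))\<^sup>2) \<le> Mbar"
    and X_meas: "\<And>i. X i \<in> measurable P p"
    and X_distr: "\<And>i. distr P p (X i) = p"
    and X_indep: "prob_space.indep_vars P (\<lambda>_. p) X UNIV"
    and theta_0: "\<And>\<omega>. theta 0 \<omega> = theta0"
    and theta_Suc: "\<And>t \<omega>. theta (Suc t) \<omega> =
        theta t \<omega> - eta *\<^sub>R (gradf (X t \<omega>) (theta t \<omega>) - c (X t \<omega>) (theta t \<omega>))"
    and eta_pos: "0 < eta" and eta_le: "eta \<le> 1 / (2 * L)"
    and rho_ne: "1 - eta * H * (1 - 2 * L * eta) \<noteq> 1"
  shows "\<forall>t. prob_space.expectation P (\<lambda>\<omega>. (norm (theta t \<omega> - thetas))\<^sup>2)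
           \<le> (1 - eta * H * (1 - 2 * L * eta)) ^ t * (norm (theta0 - thetas))\<^sup>2
             + 2 * eta\<^sup>2 * Mbar * ((1 - eta * H * (1 - 2 * L * eta)) ^ t - 1)
               / ((1 - eta * H * (1 - 2 * L * eta)) - 1)"
proof -
  interpret P: prob_space P by (rule P_prob)
  define \<rho> where "\<rho> = 1 - eta * H * (1 - 2 * L * eta)"
  define s where "s e \<theta> = \<theta> - eta *\<^sub>R (gradf e \<theta> - c e \<theta>)" for e \<theta>
  define V where "V \<theta> = (norm (\<theta> - thetas))\<^sup>2" for \<theta>
  have s_meas: "(\<lambda>(e, \<theta>). s e \<theta>) \<in> borel_measurable (p \<Otimes>\<^sub>M borel)"
    using gradf_meas c_meas unfolding s_def by (simp add: split_beta') measurable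
  have eta_L: "2 * L * eta \<le> 1" using eta_le L_pos by (simp add: field_simps)
  obtain e0 where e0: "e0 \<in> space p" using prob_space.not_empty[OF p_prob] by auto
  have \<rho>_nonneg: "0 \<le> \<rho>"
    unfolding \<rho>_def using H_pos strongly_convex_modulus_le_lipschitz[OF grad[OF e0] A2[OF e0] A1[OF e0]]
    by (intro sgd_contraction_factor_nonneg[OF eta_pos eta_L]) auto
  have grad_mean: "integral\<^sup>L p (\<lambda>e. gradf e thetas) = 0"
    using gradient_zero_at_minimum[OF interchange minimizer] .
  have step: "(\<integral>\<^sup>+e. V (s e \<theta>) \<partial>p) \<le> ennreal (\<rho> * V \<theta> + 2 * eta\<^sup>2 * Mbar)" for \<theta>
    unfolding V_def s_def \<rho>_def
  proof (rule nn_integral_sgd_step_le[OF p_prob gradf_meas c_meas gradf_int c_int M_int grad_mean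
        c_zero A4 _ _ eta_pos eta_L])
    fix e \<theta> assume e: "e \<in> space p"
    show "(norm (gradf e \<theta> - gradf e thetas))\<^sup>2 \<le> 2 * L * ((gradf e \<theta> - gradf e thetas) \<bullet> (\<theta> - thetas))"
      using H_pos
      by (intro strongly_convex_on_lipschitz_gradient_cocoercive[OF grad[OF e] A1[OF e] L_pos A2[OF e]]) simp
    show "H * (norm (\<theta> - thetas))\<^sup>2 \<le> (gradf e \<theta> - gradf e thetas) \<bullet> (\<theta> - thetas)"
      by (rule strongly_convex_on_gradient_strongly_monotone[OF grad[OF e] A2[OF e]])
  qed (use H_pos in simp)
  have theta_iterate: "theta t \<omega> = iterate_steps s theta0 t (\<lambda>i. X i \<omega>)" for t \<omega>
    by (induction t) (simp_all add: theta_0 theta_Suc s_def)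
  have geometric: "(\<Sum>i<t. \<rho> ^ i) = (\<rho> ^ t - 1) / (\<rho> - 1)" for t
    using rho_ne unfolding \<rho>_def sum_gp_strict by (simp add: field_simps)
  show ?thesis
    unfolding \<rho>_def[symmetric]
    using P.expectation_iterate_steps_le[OF p_prob X_indep X_meas X_distr s_meas _ _ step \<rho>_nonneg]
      Mbar_nonneg
    by (simp add: V_def theta_iterate geometric)
qed

end
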